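(* Let $(X,\mathcal{A},\mu)$ be a probability space, $\theta$ a measure-preserving endomorphism, $\varphi$ a bounded ceiling function and $(\overline{X},\overline{\mu},(\Phi_t))$ the associated special flow. Let $A\subset X$ be a hole such that the escape rate $\rho(A,\varphi)$ exists. Then \[\rho(A,\varphi)=\lim_{t\to\infty}-\frac1t\log\overline{\mu}\big(\{(x,s)\in\overline{X}:N_A(x)\ge N_t^\varphi(x)\}\big)=\lim_{t\to\infty}-\frac1t\log\mu\big(\{x\in X:N_A(x)\ge N_t^\varphi(x)\}\big).\]
   Context: A ceiling function is a measurable $\varphi:X\to\mathbb{R}$ with $\inf\varphi>0$. $S_n\varphi=\sum_{k=0}^{n-1}\varphi\circ\theta^k$, $N_t^\varphi(x)=\min\{n\in\mathbb{N}_0:S_n\varphi(x)>t\}$ for $t\ge0$, and $N_A(x)=\min\{n\in\mathbb{N}_0:\theta^n(x)\in A\}$. Special flow: $\overline{X}=\{(x,s):0\le s<\varphi(x)\}$, $\overline{\mu}$ the restriction of $\mu\otimes$Lebesgue; $\Phi_t(x,s)=(x,s+t)$ if $t<\varphi(x)-s$, otherwise $\Phi_t(x,s)=(\theta^{N-1}x,s+t-S_{N-1}\varphi(x))$ with $N=N^\varphi_{s+t}(x)$. $\pi_1$ is the projection to $X$. A hole $A\subset X$ is a measurable set with $\bigcup_{n\ge0}\theta^{-n}(A)=X$ up to a $\mu$-null set. The escape rate $\rho(A,\varphi)$ is $\lim_{t\to\infty}-\frac1t\log\overline{\mu}(\{(x,s):\forall\tau\in[0,t]:\Phi_\tau(x,s)\notin\pi_1^{-1}(A)\})$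 when this limit exists. *)

theory Defs
  imports "HOL-Probability.Probability"
begin

definition measure_preserving :: "'a measure \<Rightarrow> 'b measure \<Rightarrow> ('a \<Rightarrow> 'b) set" where
  "measure_preserving M N =
     {f \<in> measurable M N. \<forall>B\<in>sets N. emeasure M (f -` B \<inter> space M) = emeasure N B}"

definition birk_sum :: "('a \<Rightarrow> 'a) \<Rightarrow> ('a \<Rightarrow> real) \<Rightarrow> nat \<Rightarrow> 'a \<Rightarrow> real" where
  "birk_sum \<theta> \<phi> n x = (\<Sum>k<n. \<phi> ((\<theta> ^^ k) x))"

definition N_ceil :: "('a \<Rightarrow> 'a) \<Rightarrow> ('a \<Rightarrow> real) \<Rightarrow> real \<Rightarrow> 'a \<Rightarrow> nat" where
  "N_ceil \<theta> \<phi> t x = (LEAST n. birk_sum \<theta> \<phi> n x > t)"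

definition N_hit :: "('a \<Rightarrow> 'a) \<Rightarrow> 'a set \<Rightarrow> 'a \<Rightarrow> enat" where
  "N_hit \<theta> A x = (if \<exists>n. (\<theta> ^^ n) x \<in> A then enat (LEAST n. (\<theta> ^^ n) x \<in> A) else \<infinity>)"

definition flow_space :: "'a measure \<Rightarrow> ('a \<Rightarrow> real) \<Rightarrow> ('a \<times> real) set" where
  "flow_space M \<phi> = {(x, s). x \<in> space M \<and> 0 \<le> s \<and> s < \<phi> x}"

definition flow_measure :: "'a measure \<Rightarrow> ('a \<Rightarrow> real) \<Rightarrow> ('a \<times> real) set \<Rightarrow> real" where
  "flow_measure M \<phi> S = measure (M \<Otimes>\<^sub>M lborel) (S \<inter> flow_space M \<phi>)"

definition special_flow :: "('a \<Rightarrow> 'a) \<Rightarrow> ('a \<Rightarrow> real) \<Rightarrow> real \<Rightarrow> 'a \<times> real \<Rightarrow> 'a \<times> real" where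
  "special_flow \<theta> \<phi> t p = (case p of (x, s) \<Rightarrow>
     (if t < \<phi> x - s then (x, s + t)
      else (let N = N_ceil \<theta> \<phi> (s + t) x in
            ((\<theta> ^^ (N - 1)) x, s + t - birk_sum \<theta> \<phi> (N - 1) x))))"

definition survivors :: "'a measure \<Rightarrow> ('a \<Rightarrow> 'a) \<Rightarrow> ('a \<Rightarrow> real) \<Rightarrow> 'a set \<Rightarrow> real \<Rightarrow> ('a \<times> real) set" where
  "survivors M \<theta> \<phi> A t =
     {p \<in> flow_space M \<phi>. \<forall>\<tau>\<in>{0..t}. fst (special_flow \<theta> \<phi> \<tau> p) \<notin> A}"

definition is_hole :: "'a measure \<Rightarrow> ('a \<Rightarrow> 'a) \<Rightarrow> 'a set \<Rightarrow> bool" where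
  "is_hole M \<theta> A \<longleftrightarrow> A \<in> sets M \<and> (AE x in M. \<exists>n. (\<theta> ^^ n) x \<in> A)"

definition has_escape_rate :: "'a measure \<Rightarrow> ('a \<Rightarrow> 'a) \<Rightarrow> ('a \<Rightarrow> real) \<Rightarrow> 'a set \<Rightarrow> real \<Rightarrow> bool" where
  "has_escape_rate M \<theta> \<phi> A \<rho> \<longleftrightarrow>
     ((\<lambda>t. - (1 / t) * ln (flow_measure M \<phi> (survivors M \<theta> \<phi> A t))) \<longlongrightarrow> \<rho>) at_top"

end

theory Submission
  imports Defs
begin

text \<open>Call a point x avoiding up to time t if its orbit misses A at every index k with
  S_k \<phi> x \<le> t; this is exactly N_A x \<ge> N_t^\<phi> x. A point (x, s) of the phase space survives
  up to time t iff x avoids up to time s + t. Since 0 \<le> s < \<phi> x \<le> C, the survivors are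
  squeezed between the cylinders over the points avoiding up to times t + C and t, and a
  cylinder over E has \<mu>-bar measure between c \<mu>(E) and C \<mu>(E). Constant factors and a bounded
  time shift do not change an exponential decay rate.\<close>

lemma tendsto_inverse_scaled_at_top: "((\<lambda>t::real. K / t) \<longlongrightarrow> 0) at_top"
  by (rule tendsto_divide_0[OF tendsto_const filterlim_at_top_imp_at_infinity[OF filterlim_ident]])

lemma tendsto_log_decay_shift:
  fixes f :: "real \<Rightarrow> real"
  assumes lim: "((\<lambda>t. - (1/t) * ln (f t)) \<longlongrightarrow> \<rho>) at_top"
    and pos: "eventually (\<lambda>t. 0 < f t) at_top" and b: "0 < b"
  shows "((\<lambda>t. - (1/t) * ln (b * f (t - D))) \<longlongrightarrow> \<rho>) at_top"
proof -
  have shift: "filterlim (\<lambda>t. t - D) at_top at_top"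
    using filterlim_tendsto_add_at_top[OF tendsto_const filterlim_ident, of "- D"] by simp
  have "((\<lambda>t. - ln b / t + (1 - D / t) * (- (1/(t - D)) * ln (f (t - D))))
      \<longlongrightarrow> 0 + (1 - 0) * \<rho>) at_top"
    by (intro tendsto_intros tendsto_inverse_scaled_at_top filterlim_compose[OF lim shift])
  moreover have "eventually (\<lambda>t. - ln b / t + (1 - D / t) * (- (1/(t - D)) * ln (f (t - D)))
      = - (1/t) * ln (b * f (t - D))) at_top"
    using eventually_gt_at_top[of D] eventually_gt_at_top[of 0]
      eventually_compose_filterlim[OF pos shift]
    by eventually_elim (use b in \<open>simp add: ln_mult field_simps\<close>)
  ultimately show ?thesis
    by (simp add: tendsto_cong)
qed

lemma tendsto_log_decay_sandwich:
  fixes f u :: "real \<Rightarrow> real"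
  assumes lim: "((\<lambda>t. - (1/t) * ln (f t)) \<longlongrightarrow> \<rho>) at_top"
    and nonneg: "\<And>t. 0 \<le> t \<Longrightarrow> 0 \<le> f t"
    and antimono: "\<And>t t'. 0 \<le> t \<Longrightarrow> t \<le> t' \<Longrightarrow> f t' \<le> f t"
    and bounds: "eventually (\<lambda>t. a * f t \<le> u t \<and> u t \<le> b * f (t - D)) at_top"
    and a: "0 < a" and b: "0 < b"
  shows "((\<lambda>t. - (1/t) * ln (u t)) \<longlongrightarrow> \<rho>) at_top"
proof (cases "\<forall>t\<ge>0. 0 < f t")
  case True
  have pos: "eventually (\<lambda>t. 0 < f t) at_top"
    using eventually_ge_at_top[of 0] by eventually_elim (use True in simp)
  show ?thesis
  proof (rule tendsto_sandwich[OF _ _ tendsto_log_decay_shift[OF lim pos b]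
        tendsto_log_decay_shift[OF lim pos a, where D = 0]])
    show "eventually (\<lambda>t. - (1/t) * ln (b * f (t - D)) \<le> - (1/t) * ln (u t)) at_top"
      using bounds eventually_gt_at_top[of 0] eventually_ge_at_top[of D]
    proof eventually_elim
      case (elim t)
      then have "0 < u t" using True a by (smt (verit) mult_pos_pos)
      then show ?case using elim by (simp add: divide_simps)
    qed
    show "eventually (\<lambda>t. - (1/t) * ln (u t) \<le> - (1/t) * ln (a * f (t - 0))) at_top"
      using bounds eventually_gt_at_top[of 0]
    proof eventually_elim
      case (elim t)
      then have "0 < a * f t" using True a by simp
      then show ?case using elim by (simp add: divide_simps)
    qed
  qed
next
  case False
  \<comment> \<open>Then f vanishes eventually; as ln 0 = 0, both \<rho> and the rate of u are 0.\<close>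
  then obtain t0 where t0: "0 \<le> t0" "f t0 = 0" using nonneg by force
  have vanish: "f t = 0" if "t0 \<le> t" for t
    using antimono[OF t0(1) that] nonneg[of t] t0 that by simp
  have "eventually (\<lambda>t. - (1/t) * ln (f t) = 0) at_top"
    using eventually_ge_at_top[of t0] by eventually_elim (simp add: vanish)
  then have "((\<lambda>t. - (1/t) * ln (f t)) \<longlongrightarrow> 0) at_top"
    by (rule tendsto_eventually)
  then have "\<rho> = 0" using lim by (rule tendsto_unique[OF trivial_limit_at_top_linorder, symmetric])
  moreover have "eventually (\<lambda>t. - (1/t) * ln (u t) = 0) at_top"
    using bounds eventually_ge_at_top[of "t0 + D"] eventually_ge_at_top[of t0]
    by eventually_elim (use a b in \<open>auto simp: vanish\<close>)
  ultimately show ?thesis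
    by (simp add: tendsto_eventually)
qed

lemma birk_sum_0 [simp]: "birk_sum \<theta> \<phi> 0 x = 0"
  by (simp add: birk_sum_def)

lemma birk_sum_Suc: "birk_sum \<theta> \<phi> (Suc n) x = birk_sum \<theta> \<phi> n x + \<phi> ((\<theta> ^^ n) x)"
  by (simp add: birk_sum_def)

lemma enat_le_N_hit_iff: "enat m \<le> N_hit \<theta> A x \<longleftrightarrow> (\<forall>k<m. (\<theta> ^^ k) x \<notin> A)"
proof (cases "\<exists>n. (\<theta> ^^ n) x \<in> A")
  case True
  define L where "L = (LEAST n. (\<theta> ^^ n) x \<in> A)"
  have "(\<theta> ^^ L) x \<in> A" and "\<And>k. k < L \<Longrightarrow> (\<theta> ^^ k) x \<notin> A"
    unfolding L_def by (auto intro: LeastI_ex[OF True] dest: not_less_Least)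
  moreover have "N_hit \<theta> A x = enat L"
    using True by (simp add: N_hit_def L_def)
  ultimately show ?thesis
    by (auto simp: not_less[symmetric])
next
  case False
  then show ?thesis by (simp add: N_hit_def)
qed

definition avoids_upto :: "('a \<Rightarrow> 'a) \<Rightarrow> ('a \<Rightarrow> real) \<Rightarrow> 'a set \<Rightarrow> real \<Rightarrow> 'a \<Rightarrow> bool" where
  "avoids_upto \<theta> \<phi> A t x \<longleftrightarrow> (\<forall>k. birk_sum \<theta> \<phi> k x \<le> t \<longrightarrow> (\<theta> ^^ k) x \<notin> A)"

lemma avoids_upto_antimono: "t \<le> t' \<Longrightarrow> avoids_upto \<theta> \<phi> A t' x \<Longrightarrow> avoids_upto \<theta> \<phi> A t x"
  by (auto simp: avoids_upto_def)

lemma survivors_antimono: "t \<le> t' \<Longrightarrow> survivors M \<theta> \<phi> A t' \<subseteq> survivors M \<theta> \<phi> A t"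
  by (auto simp: survivors_def)

locale positive_ceiling =
  fixes M :: "'a measure" and \<theta> :: "'a \<Rightarrow> 'a" and \<phi> :: "'a \<Rightarrow> real" and c :: real
  assumes into_space: "\<And>x. x \<in> space M \<Longrightarrow> \<theta> x \<in> space M"
    and c_pos: "0 < c"
    and ceiling_ge: "\<And>x. x \<in> space M \<Longrightarrow> c \<le> \<phi> x"
begin

lemma funpow_in_space: "x \<in> space M \<Longrightarrow> (\<theta> ^^ k) x \<in> space M"
  by (induction k) (auto intro: into_space)

lemma ceiling_funpow_pos: "x \<in> space M \<Longrightarrow> 0 < \<phi> ((\<theta> ^^ k) x)"
  using ceiling_ge[OF funpow_in_space] c_pos by (meson less_le_trans)

lemma birk_sum_less_Suc: "x \<in> space M \<Longrightarrow> birk_sum \<theta> \<phi> k x < birk_sum \<theta> \<phi> (Suc k) x"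
  by (simp add: birk_sum_Suc ceiling_funpow_pos)

lemma birk_sum_mono: "x \<in> space M \<Longrightarrow> m \<le> n \<Longrightarrow> birk_sum \<theta> \<phi> m x \<le> birk_sum \<theta> \<phi> n x"
  unfolding birk_sum_def by (rule sum_mono2) (auto intro: less_imp_le ceiling_funpow_pos)

lemma birk_sum_ge: "x \<in> space M \<Longrightarrow> real n * c \<le> birk_sum \<theta> \<phi> n x"
  using sum_mono[of "{..<n}" "\<lambda>_. c" "\<lambda>k. \<phi> ((\<theta> ^^ k) x)"] ceiling_ge[OF funpow_in_space]
  by (simp add: birk_sum_def)

lemma N_ceil_exceeds: "x \<in> space M \<Longrightarrow> t < birk_sum \<theta> \<phi> (N_ceil \<theta> \<phi> t x) x"
proof -
  assume x: "x \<in> space M"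
  obtain n where "t / c < real n" using reals_Archimedean2 by blast
  then have "t < birk_sum \<theta> \<phi> n x"
    using birk_sum_ge[OF x, of n] c_pos by (simp add: pos_divide_less_eq)
  then show ?thesis unfolding N_ceil_def by (rule LeastI)
qed

lemma less_N_ceil_iff: "x \<in> space M \<Longrightarrow> k < N_ceil \<theta> \<phi> t x \<longleftrightarrow> birk_sum \<theta> \<phi> k x \<le> t"
  using N_ceil_exceeds[of x t] birk_sum_mono[of x "N_ceil \<theta> \<phi> t x" k] not_less_Least[of k]
  by (force simp: N_ceil_def)

lemma N_ceil_eqI:
  "x \<in> space M \<Longrightarrow> birk_sum \<theta> \<phi> k x \<le> t \<Longrightarrow> t < birk_sum \<theta> \<phi> (Suc k) x \<Longrightarrow> N_ceil \<theta> \<phi> t x = Suc k"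
  using less_N_ceil_iff[of x k t] less_N_ceil_iff[of x "Suc k" t] by simp

lemma enat_N_ceil_le_N_hit_iff:
  "x \<in> space M \<Longrightarrow> enat (N_ceil \<theta> \<phi> t x) \<le> N_hit \<theta> A x \<longleftrightarrow> avoids_upto \<theta> \<phi> A t x"
  by (simp add: enat_le_N_hit_iff less_N_ceil_iff avoids_upto_def)

lemma fst_special_flow:
  assumes x: "x \<in> space M" and s: "0 \<le> s" "s < \<phi> x" and \<tau>: "0 \<le> \<tau>"
  shows "fst (special_flow \<theta> \<phi> \<tau> (x, s)) = (\<theta> ^^ (N_ceil \<theta> \<phi> (s + \<tau>) x - 1)) x"
proof (cases "\<tau> < \<phi> x - s")
  case True
  then have "N_ceil \<theta> \<phi> (s + \<tau>) x = Suc 0"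
    using s \<tau> by (intro N_ceil_eqI[OF x]) (auto simp: birk_sum_Suc)
  then show ?thesis using True by (simp add: special_flow_def)
next
  case False
  then show ?thesis by (simp add: special_flow_def Let_def)
qed

text \<open>The return with index k is visited at flow time S_k - s, so survival up to time t
  means avoiding A at every return with Birkhoff time at most s + t.\<close>
lemma survivor_avoids_upto:
  assumes surv: "(x, s) \<in> survivors M \<theta> \<phi> A t" and t: "0 \<le> t"
  shows "avoids_upto \<theta> \<phi> A (s + t) x"
  unfolding avoids_upto_def
proof (intro allI impI)
  fix k assume k: "birk_sum \<theta> \<phi> k x \<le> s + t"
  have x: "x \<in> space M" and s: "0 \<le> s" "s < \<phi> x"
    using surv by (auto simp: survivors_def flow_space_def)
  define \<tau> where "\<tau> = max s (birk_sum \<theta> \<phi> k x) - s"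
  have "s < birk_sum \<theta> \<phi> (Suc k) x"
    using s birk_sum_mono[OF x, of 1 "Suc k"] by (simp add: birk_sum_Suc)
  then have "N_ceil \<theta> \<phi> (s + \<tau>) x = Suc k"
    using birk_sum_less_Suc[OF x, of k] by (intro N_ceil_eqI[OF x]) (auto simp: \<tau>_def)
  then have "fst (special_flow \<theta> \<phi> \<tau> (x, s)) = (\<theta> ^^ k) x"
    using fst_special_flow[OF x s, of \<tau>] by (simp add: \<tau>_def)
  moreover have "\<tau> \<in> {0..t}" using k t by (auto simp: \<tau>_def)
  then have "fst (special_flow \<theta> \<phi> \<tau> (x, s)) \<notin> A"
    using surv unfolding survivors_def by blast
  ultimately show "(\<theta> ^^ k) x \<notin> A"
    by simp
qed

lemma avoids_upto_survivor:
  assumes xs: "(x, s) \<in> flow_space M \<phi>" and avoid: "avoids_upto \<theta> \<phi> A (s + t) x"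
  shows "(x, s) \<in> survivors M \<theta> \<phi> A t"
  unfolding survivors_def
proof (intro CollectI conjI ballI xs)
  fix \<tau> assume \<tau>: "\<tau> \<in> {0..t}"
  have x: "x \<in> space M" and s: "0 \<le> s" "s < \<phi> x"
    using xs by (auto simp: flow_space_def)
  have "0 < N_ceil \<theta> \<phi> (s + \<tau>) x"
    using less_N_ceil_iff[OF x, of 0] s \<tau> by simp
  then have "birk_sum \<theta> \<phi> (N_ceil \<theta> \<phi> (s + \<tau>) x - 1) x \<le> s + t"
    using less_N_ceil_iff[OF x, of "N_ceil \<theta> \<phi> (s + \<tau>) x - 1" "s + \<tau>"] \<tau> by simp
  then show "fst (special_flow \<theta> \<phi> \<tau> (x, s)) \<notin> A"
    using avoid fst_special_flow[OF x s, of \<tau>] \<tau> by (simp add: avoids_upto_def)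
qed

lemma survivors_eq:
  "0 \<le> t \<Longrightarrow> survivors M \<theta> \<phi> A t = {(x, s) \<in> flow_space M \<phi>. avoids_upto \<theta> \<phi> A (s + t) x}"
  using survivor_avoids_upto avoids_upto_survivor by (fastforce simp: survivors_def)

end

locale bounded_ceiling = finite_measure M
  for M :: "'a measure" and \<theta> :: "'a \<Rightarrow> 'a" and \<phi> :: "'a \<Rightarrow> real" and c C :: real and A :: "'a set" +
  assumes \<theta>_measurable: "\<theta> \<in> measurable M M"
    and \<phi>_measurable: "\<phi> \<in> borel_measurable M"
    and c_pos: "0 < c" and c_le_C: "c \<le> C"
    and ceiling_bounds: "\<And>x. x \<in> space M \<Longrightarrow> c \<le> \<phi> x \<and> \<phi> x \<le> C"
    and A_sets: "A \<in> sets M"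
begin

sublocale positive_ceiling M \<theta> \<phi> c
  using \<theta>_measurable c_pos ceiling_bounds by unfold_locales (auto simp: measurable_space)

lemma funpow_measurable: "\<theta> ^^ k \<in> measurable M M"
  by (induction k) (auto intro: measurable_compose[OF _ \<theta>_measurable])

lemma birk_sum_measurable: "birk_sum \<theta> \<phi> k \<in> borel_measurable M"
  unfolding birk_sum_def[abs_def]
  by (intro borel_measurable_sum measurable_compose[OF funpow_measurable \<phi>_measurable])

lemmas [measurable] = funpow_measurable birk_sum_measurable \<phi>_measurable A_sets

lemma pred_avoids_upto: "Measurable.pred M (avoids_upto \<theta> \<phi> A t)"
  unfolding avoids_upto_def by measurable

lemma pred_avoids_upto_shifted:
  "Measurable.pred (M \<Otimes>\<^sub>M lborel) (\<lambda>p. avoids_upto \<theta> \<phi> A (snd p + t) (fst p))"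
  unfolding avoids_upto_def by measurable

lemma flow_space_eq: "flow_space M \<phi> = {p \<in> space (M \<Otimes>\<^sub>M lborel). 0 \<le> snd p \<and> snd p < \<phi> (fst p)}"
  by (auto simp: flow_space_def space_pair_measure)

lemma flow_space_sets: "flow_space M \<phi> \<in> sets (M \<Otimes>\<^sub>M lborel)"
  unfolding flow_space_eq by measurable

lemma emeasure_Times_interval:
  "E \<in> sets M \<Longrightarrow> 0 \<le> r \<Longrightarrow> emeasure (M \<Otimes>\<^sub>M lborel) (E \<times> {0..<r}) = ennreal (measure M E * r)"
  by (subst lborel.emeasure_pair_measure_Times) (auto simp: emeasure_eq_measure ennreal_mult)

lemma Times_interval_fmeasurable:
  "E \<in> sets M \<Longrightarrow> 0 \<le> (r::real) \<Longrightarrow> E \<times> {0..<r} \<in> fmeasurable (M \<Otimes>\<^sub>M lborel)"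
  by (intro fmeasurableI) (auto simp: emeasure_Times_interval)

lemma measure_Times_interval:
  "E \<in> sets M \<Longrightarrow> 0 \<le> r \<Longrightarrow> measure (M \<Otimes>\<^sub>M lborel) (E \<times> {0..<r}) = measure M E * r"
  by (simp add: measure_def emeasure_Times_interval)

lemma flow_space_fmeasurable: "flow_space M \<phi> \<in> fmeasurable (M \<Otimes>\<^sub>M lborel)"
proof (rule fmeasurableI2[OF Times_interval_fmeasurable[OF sets.top]])
  show "0 \<le> C" using c_pos c_le_C by simp
  show "flow_space M \<phi> \<subseteq> space M \<times> {0..<C}"
    using ceiling_bounds by (fastforce simp: flow_space_def)
qed (rule flow_space_sets)

lemma flow_measure_mono:
  assumes "S \<inter> flow_space M \<phi> \<subseteq> T" "S \<in> sets (M \<Otimes>\<^sub>M lborel)" "T \<in> sets (M \<Otimes>\<^sub>M lborel)"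
  shows "flow_measure M \<phi> S \<le> flow_measure M \<phi> T"
  unfolding flow_measure_def using assms flow_space_sets
  by (intro measure_mono_fmeasurable fmeasurableI2[OF flow_space_fmeasurable]) auto

lemma cylinder_sets: "E \<in> sets M \<Longrightarrow> E \<times> UNIV \<in> sets (M \<Otimes>\<^sub>M lborel)"
  by (intro pair_measureI) auto

text \<open>The fibre of the phase space over x has length \<phi> x \<in> [c, C].\<close>
lemma flow_measure_cylinder_bounds:
  assumes E: "E \<in> sets M"
  shows "c * measure M E \<le> flow_measure M \<phi> (E \<times> UNIV)"
    and "flow_measure M \<phi> (E \<times> UNIV) \<le> C * measure M E"
proof -
  have "E \<times> {0..<c} \<subseteq> flow_space M \<phi>"
    using ceiling_bounds sets.sets_into_space[OF E] by (fastforce simp: flow_space_def)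
  then have "flow_measure M \<phi> (E \<times> {0..<c}) = measure M E * c"
    using E c_pos by (simp add: flow_measure_def Int_absorb2 measure_Times_interval)
  moreover have "flow_measure M \<phi> (E \<times> {0..<c}) \<le> flow_measure M \<phi> (E \<times> UNIV)"
    using E by (intro flow_measure_mono cylinder_sets pair_measureI) auto
  ultimately show "c * measure M E \<le> flow_measure M \<phi> (E \<times> UNIV)"
    by (simp add: mult.commute)
  have "(E \<times> UNIV) \<inter> flow_space M \<phi> \<subseteq> E \<times> {0..<C}"
    using ceiling_bounds by (fastforce simp: flow_space_def)
  then have "flow_measure M \<phi> (E \<times> UNIV) \<le> measure (M \<Otimes>\<^sub>M lborel) (E \<times> {0..<C})"
    unfolding flow_measure_def
    using E c_pos c_le_C flow_space_sets cylinder_sets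
    by (intro measure_mono_fmeasurable Times_interval_fmeasurable) auto
  then show "flow_measure M \<phi> (E \<times> UNIV) \<le> C * measure M E"
    using E c_pos c_le_C by (simp add: measure_Times_interval mult.commute)
qed

definition avoiders :: "real \<Rightarrow> 'a set" where
  "avoiders t = {x \<in> space M. avoids_upto \<theta> \<phi> A t x}"

lemma avoiders_sets: "avoiders t \<in> sets M"
  unfolding avoiders_def using pred_avoids_upto by measurable

lemma survivors_sets:
  assumes "0 \<le> t"
  shows "survivors M \<theta> \<phi> A t \<in> sets (M \<Otimes>\<^sub>M lborel)"
proof -
  have "survivors M \<theta> \<phi> A t = {p \<in> space (M \<Otimes>\<^sub>M lborel).
      0 \<le> snd p \<and> snd p < \<phi> (fst p) \<and> avoids_upto \<theta> \<phi> A (snd p + t) (fst p)}"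
    using assms by (auto simp: survivors_eq flow_space_eq)
  also have "\<dots> \<in> sets (M \<Otimes>\<^sub>M lborel)"
    using pred_avoids_upto_shifted by measurable
  finally show ?thesis .
qed

lemma survivors_subset_cylinder: "0 \<le> t \<Longrightarrow> survivors M \<theta> \<phi> A t \<subseteq> avoiders t \<times> UNIV"
  by (auto simp: survivors_eq avoiders_def flow_space_def intro: avoids_upto_antimono[rotated])

lemma cylinder_subset_survivors:
  "0 \<le> t \<Longrightarrow> (avoiders (t + C) \<times> UNIV) \<inter> flow_space M \<phi> \<subseteq> survivors M \<theta> \<phi> A t"
  using ceiling_bounds
  by (fastforce simp: survivors_eq avoiders_def flow_space_def intro: avoids_upto_antimono[rotated])

lemma escape_rate_avoiders:
  assumes "has_escape_rate M \<theta> \<phi> A \<rho>"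
  shows "((\<lambda>t. - (1/t) * ln (flow_measure M \<phi> (avoiders t \<times> UNIV))) \<longlongrightarrow> \<rho>) at_top"
    and "((\<lambda>t. - (1/t) * ln (measure M (avoiders t))) \<longlongrightarrow> \<rho>) at_top"
proof -
  define f where "f t = flow_measure M \<phi> (survivors M \<theta> \<phi> A t)" for t
  define g where "g t = flow_measure M \<phi> (avoiders t \<times> UNIV)" for t
  have lim: "((\<lambda>t. - (1/t) * ln (f t)) \<longlongrightarrow> \<rho>) at_top"
    using assms unfolding has_escape_rate_def f_def .
  have f_nonneg: "0 \<le> f t" for t
    by (simp add: f_def flow_measure_def)
  have f_antimono: "f t' \<le> f t" if "0 \<le> t" "t \<le> t'" for t t'
    unfolding f_def using that survivors_antimono[OF that(2), of M \<theta> \<phi> A]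
    by (intro flow_measure_mono survivors_sets) auto
  have f_g: "f t \<le> g t \<and> g t \<le> f (t - C)" if "C \<le> t" for t
  proof
    have "0 \<le> t" "0 \<le> t - C" using that c_pos c_le_C by linarith+
    then show "f t \<le> g t" "g t \<le> f (t - C)"
      unfolding f_def g_def
      using survivors_subset_cylinder cylinder_subset_survivors[of "t - C"]
      by (auto intro!: flow_measure_mono survivors_sets cylinder_sets avoiders_sets)
  qed
  have g_bounds: "eventually (\<lambda>t. 1 * f t \<le> g t \<and> g t \<le> 1 * f (t - C)) at_top"
    using eventually_ge_at_top[of C] by eventually_elim (simp add: f_g)
  show "((\<lambda>t. - (1/t) * ln (g t)) \<longlongrightarrow> \<rho>) at_top"
    using tendsto_log_decay_sandwich[OF lim f_nonneg f_antimono g_bounds] by simp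
  have measure_bounds: "eventually (\<lambda>t. 1/C * f t \<le> measure M (avoiders t) \<and>
      measure M (avoiders t) \<le> 1/c * f (t - C)) at_top"
    using eventually_ge_at_top[of C]
  proof eventually_elim
    case (elim t)
    then show ?case
      using f_g[OF elim] flow_measure_cylinder_bounds[OF avoiders_sets, of t] c_pos c_le_C
      by (auto simp: g_def field_simps)
  qed
  show "((\<lambda>t. - (1/t) * ln (measure M (avoiders t))) \<longlongrightarrow> \<rho>) at_top"
    using tendsto_log_decay_sandwich[OF lim f_nonneg f_antimono measure_bounds] c_pos c_le_C by simp
qed

end

theorem lemma3p10:
  fixes M :: "'a measure" and \<theta> :: "'a \<Rightarrow> 'a" and \<phi> :: "'a \<Rightarrow> real"
    and A :: "'a set" and \<rho> :: real
  assumes "prob_space M"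
    and "\<theta> \<in> measure_preserving M M"
    and "\<phi> \<in> borel_measurable M"
    and "\<exists>c>0. \<forall>x\<in>space M. c \<le> \<phi> x"
    and "\<exists>C. \<forall>x\<in>space M. \<phi> x \<le> C"
    and "is_hole M \<theta> A"
    and "has_escape_rate M \<theta> \<phi> A \<rho>"
  shows "(((\<lambda>t. - (1 / t) * ln (flow_measure M \<phi>
            {(x, s) \<in> flow_space M \<phi>. N_hit \<theta> A x \<ge> enat (N_ceil \<theta> \<phi> t x)})) \<longlongrightarrow> \<rho>) at_top) \<and>
         (((\<lambda>t. - (1 / t) * ln (measure M
            {x \<in> space M. N_hit \<theta> A x \<ge> enat (N_ceil \<theta> \<phi> t x)})) \<longlongrightarrow> \<rho>) at_top)"
proof -
  obtain c where c: "0 < c" "\<forall>x\<in>space M. c \<le> \<phi> x" using assms(4) by blast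
  obtain C where C: "\<forall>x\<in>space M. \<phi> x \<le> C" using assms(5) by blast
  interpret prob_space M by (rule assms(1))
  interpret bounded_ceiling M \<theta> \<phi> c "max C c" A
    using assms(2,3,6) c C
    by unfold_locales (auto simp: measure_preserving_def is_hole_def)
  have "{x \<in> space M. N_hit \<theta> A x \<ge> enat (N_ceil \<theta> \<phi> t x)} = avoiders t" for t
    by (auto simp: avoiders_def enat_N_ceil_le_N_hit_iff)
  moreover have "flow_measure M \<phi> {(x, s) \<in> flow_space M \<phi>. N_hit \<theta> A x \<ge> enat (N_ceil \<theta> \<phi> t x)}
      = flow_measure M \<phi> (avoiders t \<times> UNIV)" for t
    unfolding flow_measure_def
    by (rule arg_cong[where f = "measure _"])
      (auto simp: flow_space_def avoiders_def enat_N_ceil_le_N_hit_iff)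
  ultimately show ?thesis
    using escape_rate_avoiders[OF assms(7)] by simp
qed

end
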